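(* Let $\langle\mathcal G,\widehat{\mathcal P}\rangle$ be a $2\frac12$-player parity game with $\widehat{\mathcal P}=\langle\widehat B_1,\dots,\widehat B_\ell\rangle$, and let $v^0$ be a vertex of $\mathcal G$. Suppose $\pi_0^*$ is a deterministic memoryless strategy of Player 0 such that $\inf_{\pi_1}P_{v^0}^{\pi_0^*,\pi_1}(\mathcal G\models\mathit{Parity}(\widehat{\mathcal P}))=1$, the infimum ranging over all strategies $\pi_1$ of Player 1. Then for every finite run $v^0\dots v^n\in V^*$ for which there exists a Player 1 strategy $\pi_1$ with $P_{v^0}^{\pi_0^*,\pi_1}(\mathcal G\models v^0\dots v^n)>0$, and for every odd $i\in\{1,\dots,\ell\}$, $$v^n\in\widehat B_i\implies\inf_{\pi_1}P_{v^n}^{\pi_0^*,\pi_1}\Big(\mathcal G\models\lozenge\lozenge\big(\square\neg\widehat B_i\vee\textstyle\bigvee_{j\text{ even},\,j\in\{i+1,\dots,\ell\}}\widehat B_j\big)\Big)=1.$$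
   Context: A $2\frac12$-player game graph is $\mathcal G=\langle V,E,\langle V_0,V_1,V_r\rangle\rangle$ with $V$ finite, $E\subseteq V\times V$, and $V_0,V_1,V_r$ a partition of $V$; at $V_0$ (resp. $V_1$) vertices Player 0 (resp. Player 1) chooses a successor, at $V_r$ vertices the successor is chosen uniformly at random among the successors. Strategies of Player $i$ are maps $\pi_i:V^*V_i\to\mathit{Dist}(V)$ supported on successors of the last vertex; deterministic memoryless strategies choose a single successor depending only on the current vertex. $P_v^{\pi_0,\pi_1}$ is the induced probability measure on infinite runs from $v$, and $P_{v^0}^{\pi_0,\pi_1}(\mathcal G\models v^0\dots v^n)$ is the probability that the run begins with $v^0\dots v^n$. A $2\frac12$-player parity game is $\langle\mathcal G,\widehat{\mathcal P}\rangle$ with $\widehat{\mathcal P}=\langle\widehat B_1,\dots,\widehat B_\ell\rangle$ disjoint (possibly empty) subsets of $V$, such that every infinite run visits some nonempty $\widehat B_i$ infinitely often. A run satisfies $\mathit{Parity}(\widehat{\mathcal P})$ iff for every odd $i$, if it visits $\widehat B_i$ infinitely often then it visits $\widehat B_j$ infinitely often for some even $j\in\{i+1,\dots,\ell\}$. Temporal operators $\lozenge,\square$ have standard LTL semantics on runs. *)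

theory Defs
  imports "HOL-Probability.Probability" "HOL-Library.Linear_Temporal_Logic_on_Streams"
begin

definition game_graph :: "('v::finite \<times> 'v) set \<Rightarrow> 'v set \<Rightarrow> 'v set \<Rightarrow> 'v set \<Rightarrow> bool" where
  "game_graph E V0 V1 Vr \<longleftrightarrow>
     V0 \<union> V1 \<union> Vr = UNIV \<and> V0 \<inter> V1 = {} \<and> V0 \<inter> Vr = {} \<and> V1 \<inter> Vr = {}
     \<and> (\<forall>v. E `` {v} \<noteq> {})"

definition strategy :: "('v \<times> 'v) set \<Rightarrow> 'v set \<Rightarrow> ('v list \<Rightarrow> 'v pmf) \<Rightarrow> bool" where
  "strategy E Vi \<pi> \<longleftrightarrow> (\<forall>h. h \<noteq> [] \<longrightarrow> last h \<in> Vi \<longrightarrow> set_pmf (\<pi> h) \<subseteq> E `` {last h})"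

definition det_memoryless :: "('v \<times> 'v) set \<Rightarrow> 'v set \<Rightarrow> ('v list \<Rightarrow> 'v pmf) \<Rightarrow> bool" where
  "det_memoryless E Vi \<pi> \<longleftrightarrow> strategy E Vi \<pi> \<and>
     (\<exists>f. \<forall>h. h \<noteq> [] \<longrightarrow> last h \<in> Vi \<longrightarrow> \<pi> h = return_pmf (f (last h)))"

definition next_pmf :: "('v \<times> 'v) set \<Rightarrow> 'v set \<Rightarrow> 'v set \<Rightarrow> ('v list \<Rightarrow> 'v pmf)
     \<Rightarrow> ('v list \<Rightarrow> 'v pmf) \<Rightarrow> 'v list \<Rightarrow> 'v pmf" where
  "next_pmf E V0 V1 \<pi>0 \<pi>1 h =
     (if last h \<in> V0 then \<pi>0 h else if last h \<in> V1 then \<pi>1 h else pmf_of_set (E `` {last h}))"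

definition prefix_prob :: "('v \<times> 'v) set \<Rightarrow> 'v set \<Rightarrow> 'v set \<Rightarrow> ('v list \<Rightarrow> 'v pmf)
     \<Rightarrow> ('v list \<Rightarrow> 'v pmf) \<Rightarrow> 'v \<Rightarrow> 'v list \<Rightarrow> real" where
  "prefix_prob E V0 V1 \<pi>0 \<pi>1 v xs =
     (if xs = [] then 1
      else if hd xs \<noteq> v then 0
      else (\<Prod>k<length xs - 1. pmf (next_pmf E V0 V1 \<pi>0 \<pi>1 (take (Suc k) xs)) (xs ! Suc k)))"

text \<open>The induced probability measure P_v^{pi0,pi1} on infinite runs (streams), characterised
  as the unique probability measure on the product sigma-algebra with the given cylinder
  probabilities.\<close>
definition play_measure :: "('v::finite \<times> 'v) set \<Rightarrow> 'v set \<Rightarrow> 'v set \<Rightarrow> ('v list \<Rightarrow> 'v pmf)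
     \<Rightarrow> ('v list \<Rightarrow> 'v pmf) \<Rightarrow> 'v \<Rightarrow> 'v stream measure" where
  "play_measure E V0 V1 \<pi>0 \<pi>1 v =
     (THE M. prob_space M \<and> sets M = sets (stream_space (count_space UNIV)) \<and>
        (\<forall>xs. measure M {\<omega> \<in> space M. stake (length xs) \<omega> = xs} = prefix_prob E V0 V1 \<pi>0 \<pi>1 v xs))"

definition is_run :: "('v \<times> 'v) set \<Rightarrow> 'v stream \<Rightarrow> bool" where
  "is_run E \<omega> \<longleftrightarrow> (\<forall>k. (\<omega> !! k, \<omega> !! Suc k) \<in> E)"

definition parity_game :: "('v \<times> 'v) set \<Rightarrow> (nat \<Rightarrow> 'v set) \<Rightarrow> nat \<Rightarrow> bool" where
  "parity_game E B l \<longleftrightarrow>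
     (\<forall>i\<in>{1..l}. \<forall>j\<in>{1..l}. i \<noteq> j \<longrightarrow> B i \<inter> B j = {}) \<and>
     (\<forall>\<omega>. is_run E \<omega> \<longrightarrow> (\<exists>i\<in>{1..l}. B i \<noteq> {} \<and> alw (ev (holds (\<lambda>x. x \<in> B i))) \<omega>))"

definition Parity :: "(nat \<Rightarrow> 'v set) \<Rightarrow> nat \<Rightarrow> 'v stream \<Rightarrow> bool" where
  "Parity B l \<omega> \<longleftrightarrow>
     (\<forall>i\<in>{1..l}. odd i \<longrightarrow> alw (ev (holds (\<lambda>x. x \<in> B i))) \<omega> \<longrightarrow>
        (\<exists>j\<in>{i+1..l}. even j \<and> alw (ev (holds (\<lambda>x. x \<in> B j))) \<omega>))"

end

theory Submission
  imports Defs
begin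

text \<open>
  Fix a strategy \<open>\<pi>\<^sub>1\<close> of Player 1 and a prefix \<open>xs\<close> that has positive probability under some
  strategy \<open>\<pi>\<^sub>1\<^sup>w\<close>. Splice the two: play \<open>\<pi>\<^sub>1\<^sup>w\<close> until the history has left \<open>butlast xs\<close>
  behind, and from then on play \<open>\<pi>\<^sub>1\<close> on the part of the history after it. Since \<open>\<pi>\<^sub>0\<close> is
  memoryless, the play from \<open>last xs\<close> under \<open>\<pi>\<^sub>1\<close> is distributed as the suffix of the play from
  \<open>v\<^sup>0\<close> under the spliced strategy, conditioned on the cylinder of \<open>xs\<close>. Conditioning on an event of
  positive probability preserves almost sure properties, and the parity condition is almost sure
  from \<open>v\<^sup>0\<close>. Finally, a run satisfying parity cannot have a suffix that visits an odd set \<open>B i\<close>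
  infinitely often while never visiting a larger even set.
\<close>

section \<open>Run distributions of history-dependent processes\<close>

definition cylinder_prob :: "('v list \<Rightarrow> 'v pmf) \<Rightarrow> 'v \<Rightarrow> 'v list \<Rightarrow> real" where
  "cylinder_prob D v xs =
     (if xs = [] then 1
      else if hd xs \<noteq> v then 0
      else (\<Prod>k<length xs - 1. pmf (D (take (Suc k) xs)) (xs ! Suc k)))"

definition run_distribution :: "('v list \<Rightarrow> 'v pmf) \<Rightarrow> 'v \<Rightarrow> 'v stream measure \<Rightarrow> bool" where
  "run_distribution D v M \<longleftrightarrow>
     prob_space M \<and> sets M = sets (stream_space (count_space UNIV)) \<and>
     (\<forall>xs. measure M {\<omega> \<in> space M. stake (length xs) \<omega> = xs} = cylinder_prob D v xs)"

lemma prefix_prob_eq_cylinder_prob: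
  "prefix_prob E V0 V1 \<pi>0 \<pi>1 v xs = cylinder_prob (next_pmf E V0 V1 \<pi>0 \<pi>1) v xs"
  unfolding prefix_prob_def cylinder_prob_def by simp

lemma cylinder_prob_cong:
  assumes "\<And>h. length h < length xs \<Longrightarrow> D h = D' h"
  shows "cylinder_prob D v xs = cylinder_prob D' v xs"
  unfolding cylinder_prob_def using assms by (intro if_cong refl prod.cong) auto

lemma Collect_stake_eq_sstart: "{\<omega>. stake (length xs) \<omega> = xs} = sstart UNIV xs"
proof -
  have "stake (length xs) \<omega> = xs \<longleftrightarrow> (\<forall>i<length xs. \<omega> !! i = xs ! i)" for \<omega>
    by (metis length_stake nth_equalityI stake_nth)
  then show ?thesis
    using sstart_eq[of _ UNIV xs] by auto
qed

lemma sets_Collect_stake_eq: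
  "{\<omega>. stake (length xs) \<omega> = xs} \<in> sets (stream_space (count_space UNIV))"
  unfolding Collect_stake_eq_sstart by (rule sstart_sets)

lemma space_eq_UNIV_if_sets_stream_space:
  "sets M = sets (stream_space (count_space UNIV)) \<Longrightarrow> space M = UNIV"
  using sets_eq_imp_space_eq[of M "stream_space (count_space UNIV)"]
  by (simp add: space_stream_space)

lemma run_distribution_unique:
  fixes v :: "'v::countable"
  assumes M: "run_distribution D v M" and N: "run_distribution D v N"
  shows "M = N"
proof (rule stream_space_eq_sstart[where S = UNIV])
  have sets: "sets M = sets (stream_space (count_space UNIV))"
    "sets N = sets (stream_space (count_space UNIV))"
    using M N by (simp_all add: run_distribution_def)
  then have space: "space M = UNIV" "space N = UNIV"
    by (simp_all add: space_eq_UNIV_if_sets_stream_space)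
  show "prob_space M" "prob_space N"
    using M N by (simp_all add: run_distribution_def)
  then interpret M: prob_space M + N: prob_space N .
  show "AE x in M. x \<in> streams UNIV" "AE x in N. x \<in> streams UNIV"
    by simp_all
  show "sets M = sets (stream_space (count_space UNIV))"
    "sets N = sets (stream_space (count_space UNIV))"
    by (fact sets)+
  fix xs :: "'v list"
  have "measure M (sstart UNIV xs) = measure N (sstart UNIV xs)"
    using M N unfolding run_distribution_def space Collect_stake_eq_sstart[symmetric] by simp
  then show "emeasure M (sstart UNIV xs) = emeasure N (sstart UNIV xs)"
    using sets sstart_sets by (simp add: M.emeasure_eq_measure N.emeasure_eq_measure)
qed simp

text \<open>
  A run distribution is realised on the product of independent choices \<open>\<omega> h \<sim> D h\<close>, one for
  every history \<open>h\<close>: the run follows the choice made at its current history.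
\<close>

primrec choice_history :: "'v \<Rightarrow> ('v list \<Rightarrow> 'v) \<Rightarrow> nat \<Rightarrow> 'v list" where
  "choice_history v \<omega> 0 = [v]"
| "choice_history v \<omega> (Suc k) = choice_history v \<omega> k @ [\<omega> (choice_history v \<omega> k)]"

definition run_of_choices :: "'v \<Rightarrow> ('v list \<Rightarrow> 'v) \<Rightarrow> 'v stream" where
  "run_of_choices v \<omega> = smap (\<lambda>k. last (choice_history v \<omega> k)) nats"

lemma length_choice_history [simp]: "length (choice_history v \<omega> k) = Suc k"
  by (induction k) auto

lemma hd_choice_history [simp]: "hd (choice_history v \<omega> k) = v"
  by (induction k) (auto simp: hd_append simp flip: length_0_conv)

lemma stake_run_of_choices: "stake (Suc k) (run_of_choices v \<omega>) = choice_history v \<omega> k"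
proof (induction k)
  case 0
  then show ?case by (simp add: run_of_choices_def)
next
  case (Suc k)
  have "stake (Suc (Suc k)) (run_of_choices v \<omega>) =
      stake (Suc k) (run_of_choices v \<omega>) @ [run_of_choices v \<omega> !! Suc k]"
    by (rule stake_Suc)
  with Suc show ?case by (simp add: run_of_choices_def)
qed

lemma choice_history_eq_iff:
  "length xs = Suc m \<Longrightarrow>
     choice_history v \<omega> m = xs \<longleftrightarrow> hd xs = v \<and> (\<forall>k<m. \<omega> (take (Suc k) xs) = xs ! Suc k)"
proof (induction m arbitrary: xs)
  case 0
  then obtain x where "xs = [x]" by (cases xs) auto
  then show ?case by auto
next
  case (Suc m)
  then obtain ys y where xs: "xs = ys @ [y]" and ys: "length ys = Suc m"
    by (cases xs rule: rev_exhaust) auto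
  have "hd xs = hd ys" "take (Suc m) xs = ys" "xs ! Suc m = y"
    "\<forall>k<m. take (Suc k) xs = take (Suc k) ys \<and> xs ! Suc k = ys ! Suc k"
    using xs ys by (auto simp: nth_append hd_append)
  then show ?case
    using Suc.IH[OF ys] xs ys by (auto simp: less_Suc_eq)
qed

lemma measurable_choice_history:
  "(\<lambda>\<omega>. choice_history v \<omega> k) \<in> measurable (PiM UNIV (\<lambda>h. measure_pmf (D h)))
     (count_space (UNIV :: 'v::countable list set))"
proof (induction k)
  case 0
  then show ?case by simp
next
  case (Suc k)
  have "(\<lambda>\<omega>. (\<lambda>h \<omega>. h @ [\<omega> h]) (choice_history v \<omega> k) \<omega>)
      \<in> measurable (PiM UNIV (\<lambda>h. measure_pmf (D h))) (count_space UNIV)"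
  proof (rule measurable_compose_countable[OF _ Suc.IH])
    fix h :: "'v list"
    have "(\<lambda>\<omega>. \<omega> h) \<in> measurable (PiM UNIV (\<lambda>h. measure_pmf (D h))) (measure_pmf (D h))"
      by (rule measurable_component_singleton) simp
    then show "(\<lambda>\<omega>. h @ [\<omega> h]) \<in> measurable (PiM UNIV (\<lambda>h. measure_pmf (D h))) (count_space UNIV)"
      by (rule measurable_compose) simp
  qed
  then show ?case by simp
qed

lemma measurable_run_of_choices:
  "run_of_choices v \<in> measurable (PiM UNIV (\<lambda>h. measure_pmf (D h)))
     (stream_space (count_space (UNIV :: 'v::countable set)))"
proof (rule measurable_stream_space2)
  fix n
  have "(\<lambda>\<omega>. last (choice_history v \<omega> n))
      \<in> measurable (PiM UNIV (\<lambda>h. measure_pmf (D h))) (count_space UNIV)"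
    by (rule measurable_compose[OF measurable_choice_history]) simp
  then show "(\<lambda>\<omega>. run_of_choices v \<omega> !! n)
      \<in> measurable (PiM UNIV (\<lambda>h. measure_pmf (D h))) (count_space UNIV)"
    by (simp add: run_of_choices_def)
qed

lemma measure_run_of_choices_prefix:
  fixes D :: "'v::countable list \<Rightarrow> 'v pmf" and v :: 'v
  defines "P \<equiv> PiM UNIV (\<lambda>h. measure_pmf (D h))"
  shows "measure P {\<omega> \<in> space P. stake (length xs) (run_of_choices v \<omega>) = xs} = cylinder_prob D v xs"
proof -
  interpret P: product_prob_space "\<lambda>h. measure_pmf (D h)" UNIV
    by unfold_locales
  consider "xs = []" | "xs \<noteq> []" "hd xs \<noteq> v" | m where "length xs = Suc m" "hd xs = v"
    by (cases xs) auto
  then show ?thesis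
  proof cases
    case 1
    then show ?thesis using P.P.prob_space by (simp add: P_def cylinder_prob_def)
  next
    case 2
    have "hd (stake (length xs) (run_of_choices v \<omega>)) = v" for \<omega>
      using 2 stake_run_of_choices[of "length xs - 1" v \<omega>] by simp
    then have "stake (length xs) (run_of_choices v \<omega>) \<noteq> xs" for \<omega>
      using 2 by metis
    with 2 show ?thesis by (simp add: cylinder_prob_def)
  next
    case 3
    define J where "J = (\<lambda>k. take (Suc k) xs) ` {..<m}"
    have inj: "inj_on (\<lambda>k. take (Suc k) xs) {..<m}"
      using 3 by (auto intro!: inj_onI dest!: arg_cong[where f = length])
    have "{\<omega> \<in> space P. stake (length xs) (run_of_choices v \<omega>) = xs}
        = {\<omega> \<in> space P. \<forall>j\<in>J. \<omega> j \<in> {xs ! length j}}"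
      using 3 choice_history_eq_iff[of xs m v] stake_run_of_choices[of m v]
      by (auto simp: J_def)
    also have "emeasure P \<dots> = (\<Prod>j\<in>J. emeasure (measure_pmf (D j)) {xs ! length j})"
      unfolding P_def by (rule P.emeasure_PiM_Collect) (auto simp: J_def)
    also have "\<dots> = (\<Prod>k<m. ennreal (pmf (D (take (Suc k) xs)) (xs ! Suc k)))"
      unfolding J_def using 3 by (simp add: prod.reindex[OF inj] emeasure_pmf_single)
    also have "\<dots> = ennreal (cylinder_prob D v xs)"
      using 3 by (cases xs) (simp_all add: prod_ennreal cylinder_prob_def)
    finally show ?thesis
      using 3 by (cases xs) (simp_all add: measure_def cylinder_prob_def prod_nonneg)
  qed
qed

lemma run_distribution_exists:
  fixes v :: "'v::countable"
  shows "\<exists>M. run_distribution D v M"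
proof -
  let ?P = "PiM UNIV (\<lambda>h. measure_pmf (D h))"
  let ?S = "stream_space (count_space (UNIV :: 'v set))"
  interpret P: product_prob_space "\<lambda>h. measure_pmf (D h)" UNIV
    by unfold_locales
  have "measure (distr ?P ?S (run_of_choices v)) {\<omega>. stake (length xs) \<omega> = xs} = cylinder_prob D v xs"
    for xs
    using measure_distr[OF measurable_run_of_choices[where D = D and v = v] sets_Collect_stake_eq]
      measure_run_of_choices_prefix[where D = D and v = v and xs = xs]
    by (simp add: vimage_def Int_def conj_commute)
  then have "run_distribution D v (distr ?P ?S (run_of_choices v))"
    using P.prob_space_distr[OF measurable_run_of_choices]
    by (simp add: run_distribution_def space_stream_space)
  then show ?thesis ..
qed

lemma play_measure_run_distribution:
  "run_distribution (next_pmf E V0 V1 \<pi>0 \<pi>1) (v::'v::finite) (play_measure E V0 V1 \<pi>0 \<pi>1 v)"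
proof -
  have "\<exists>!M. run_distribution (next_pmf E V0 V1 \<pi>0 \<pi>1) v M"
    using run_distribution_exists run_distribution_unique by blast
  then show ?thesis
    unfolding play_measure_def prefix_prob_eq_cylinder_prob run_distribution_def[symmetric]
    by (rule theI')
qed

lemma prob_space_play_measure: "prob_space (play_measure E V0 V1 \<pi>0 \<pi>1 (v::'v::finite))"
  and sets_play_measure:
    "sets (play_measure E V0 V1 \<pi>0 \<pi>1 v) = sets (stream_space (count_space UNIV))"
  using play_measure_run_distribution[of E V0 V1 \<pi>0 \<pi>1 v] by (simp_all add: run_distribution_def)

lemma play_measure_eqI:
  "run_distribution (next_pmf E V0 V1 \<pi>0 \<pi>1) (v::'v::finite) M \<Longrightarrow> play_measure E V0 V1 \<pi>0 \<pi>1 v = M"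
  using play_measure_run_distribution run_distribution_unique by blast

section \<open>Conditioning on a prefix\<close>

lemma cylinder_prob_append:
  assumes xs: "xs \<noteq> []" "hd xs = v" and ys: "ys \<noteq> []" "hd ys = last xs"
    and D': "\<And>t. t \<noteq> [] \<Longrightarrow> D' (butlast xs @ t) = D t"
  shows "cylinder_prob D' v (butlast xs @ ys) = cylinder_prob D' v xs * cylinder_prob D (last xs) ys"
proof -
  define n where "n = length xs - 1"
  define m where "m = length ys - 1"
  define bx where "bx = butlast xs"
  have lbx: "length bx = n" and lys: "length ys = Suc m" and lxs: "length xs = Suc n"
    using xs ys by (simp_all add: bx_def n_def m_def)
  have xs_eq: "xs = bx @ [hd ys]"
    using xs ys by (simp add: bx_def)
  have hd: "hd (bx @ ys) = v"
    using xs xs_eq by (cases bx) auto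
  define g where "g k = pmf (D' (take (Suc k) (bx @ ys))) ((bx @ ys) ! Suc k)" for k
  have "(\<Prod>k<n. g k) = (\<Prod>k<n. pmf (D' (take (Suc k) xs)) (xs ! Suc k))"
  proof (rule prod.cong[OF refl])
    fix k assume "k \<in> {..<n}"
    then have "take (Suc k) (bx @ ys) = take (Suc k) xs" "(bx @ ys) ! Suc k = xs ! Suc k"
      using lbx ys by (auto simp: xs_eq nth_append hd_conv_nth not_less_iff_gr_or_eq)
    then show "g k = pmf (D' (take (Suc k) xs)) (xs ! Suc k)"
      by (simp add: g_def)
  qed
  also have "\<dots> = cylinder_prob D' v xs"
    using xs lxs by (simp add: cylinder_prob_def)
  finally have prefix: "(\<Prod>k<n. g k) = cylinder_prob D' v xs" .
  have "(\<Prod>j<m. g (n + j)) = (\<Prod>j<m. pmf (D (take (Suc j) ys)) (ys ! Suc j))"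
  proof (rule prod.cong[OF refl])
    fix j
    have "take (Suc (n + j)) (bx @ ys) = bx @ take (Suc j) ys" "(bx @ ys) ! Suc (n + j) = ys ! Suc j"
      using lbx by (simp_all add: nth_append)
    then show "g (n + j) = pmf (D (take (Suc j) ys)) (ys ! Suc j)"
      using D'[of "take (Suc j) ys"] ys by (simp add: g_def bx_def)
  qed
  also have "\<dots> = cylinder_prob D (last xs) ys"
    using ys lys by (simp add: cylinder_prob_def)
  finally have suffix: "(\<Prod>j<m. g (n + j)) = cylinder_prob D (last xs) ys" .
  have "cylinder_prob D' v (bx @ ys) = (\<Prod>k<n + m. g k)"
    using hd lbx lys ys by (simp add: cylinder_prob_def g_def)
  also have "\<dots> = (\<Prod>k<n. g k) * (\<Prod>j<m. g (n + j))"
    by (induction m) (simp_all add: mult.assoc)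
  finally show ?thesis
    using prefix suffix by (simp add: bx_def)
qed

lemma stake_eq_and_stake_sdrop_eq_iff:
  assumes "xs \<noteq> []" "ys \<noteq> []"
  shows "stake (length xs) \<omega> = xs \<and> stake (length ys) (sdrop (length xs - 1) \<omega>) = ys \<longleftrightarrow>
    hd ys = last xs \<and> stake (length (butlast xs @ ys)) \<omega> = butlast xs @ ys"
proof -
  obtain bx x where xs: "xs = bx @ [x]"
    using assms(1) by (cases xs rule: rev_exhaust) auto
  obtain y ys' where ys: "ys = y # ys'"
    using assms(2) by (cases ys) auto
  let ?n = "length bx"
  have "stake (length xs) \<omega> = xs \<longleftrightarrow> stake ?n \<omega> = bx \<and> \<omega> !! ?n = x"
    using stake_Suc[of ?n \<omega>] by (simp add: xs)
  moreover have "stake (length ys) (sdrop ?n \<omega>) = ys \<longleftrightarrow>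
      \<omega> !! ?n = y \<and> stake (length ys') (sdrop (Suc ?n) \<omega>) = ys'"
    by (simp add: ys sdrop_snth)
  moreover have "stake (length (bx @ ys)) \<omega> = bx @ ys \<longleftrightarrow>
      stake ?n \<omega> = bx \<and> stake (length ys) (sdrop ?n \<omega>) = ys"
    by (simp add: stake_add[symmetric] del: stake_add)
  ultimately show ?thesis
    by (auto simp: xs ys)
qed

lemma run_distribution_sdrop_conditional:
  assumes M: "run_distribution D' v M"
    and xs: "xs \<noteq> []" "hd xs = v" and pos: "cylinder_prob D' v xs > 0"
    and D': "\<And>t. t \<noteq> [] \<Longrightarrow> D' (butlast xs @ t) = D t"
  defines "C \<equiv> {\<omega>. stake (length xs) \<omega> = xs}"
  shows "run_distribution D (last xs)
    (distr (uniform_measure M C) (stream_space (count_space UNIV)) (sdrop (length xs - 1)))"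
    (is "run_distribution D _ ?N")
proof -
  let ?S = "stream_space (count_space UNIV)"
  let ?n = "length xs - 1"
  interpret M: prob_space M
    using M by (simp add: run_distribution_def)
  have sets_M: "sets M = sets ?S" and space_M: "space M = UNIV"
    using M by (simp_all add: run_distribution_def space_eq_UNIV_if_sets_stream_space)
  have cyl: "measure M {\<omega>. stake (length zs) \<omega> = zs} = cylinder_prob D' v zs" for zs
    using M space_M by (simp add: run_distribution_def)
  have C: "C \<in> sets M" and mC: "measure M C = cylinder_prob D' v xs"
    using sets_M sets_Collect_stake_eq cyl by (simp_all add: C_def)
  have eC: "emeasure M C \<noteq> 0" "emeasure M C \<noteq> \<infinity>"
    using mC pos by (simp_all add: M.emeasure_eq_measure)
  have sdrop: "sdrop ?n \<in> measurable (uniform_measure M C) ?S"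
    using sets_M by (simp add: measurable_cong_sets[OF sets_uniform_measure])
  have "measure ?N {\<omega>. stake (length ys) \<omega> = ys} = cylinder_prob D (last xs) ys" for ys
  proof -
    have pre: "{\<omega>. stake (length ys) (sdrop ?n \<omega>) = ys} \<in> sets M"
      using measurable_sets[OF measurable_sdrop sets_Collect_stake_eq] sets_M
      by (simp add: vimage_def space_stream_space)
    have "measure ?N {\<omega>. stake (length ys) \<omega> = ys}
        = measure (uniform_measure M C) {\<omega>. stake (length ys) (sdrop ?n \<omega>) = ys}"
      using measure_distr[OF sdrop sets_Collect_stake_eq] by (simp add: vimage_def space_M)
    also have "\<dots> = measure M (C \<inter> {\<omega>. stake (length ys) (sdrop ?n \<omega>) = ys}) / measure M C"
      by (rule measure_uniform_measure[OF eC pre])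
    also have "\<dots> = cylinder_prob D (last xs) ys"
    proof (cases "ys = []")
      case True
      then show ?thesis
        using mC pos by (simp add: C_def cylinder_prob_def)
    next
      case False
      then have "C \<inter> {\<omega>. stake (length ys) (sdrop ?n \<omega>) = ys} =
          (if hd ys = last xs then {\<omega>. stake (length (butlast xs @ ys)) \<omega> = butlast xs @ ys} else {})"
        using stake_eq_and_stake_sdrop_eq_iff[OF xs(1)] by (auto simp: C_def)
      then show ?thesis
        using False mC pos cyl[of "butlast xs @ ys"]
          cylinder_prob_append[where D = D and D' = D', OF xs False _ D']
        by (simp add: cylinder_prob_def)
    qed
    finally show ?thesis .
  qed
  moreover have "prob_space ?N"
    using prob_space_uniform_measure[OF eC] sdrop by (rule prob_space.prob_space_distr)
  ultimately show ?thesis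
    by (simp add: run_distribution_def space_stream_space)
qed

section \<open>Splicing strategies\<close>

definition splice_strategy ::
    "'v list \<Rightarrow> ('v list \<Rightarrow> 'v pmf) \<Rightarrow> ('v list \<Rightarrow> 'v pmf) \<Rightarrow> 'v list \<Rightarrow> 'v pmf" where
  "splice_strategy bx \<pi> \<pi>' h =
     (if length bx < length h \<and> take (length bx) h = bx then \<pi>' (drop (length bx) h) else \<pi> h)"

lemma strategy_splice_strategy:
  assumes "strategy E Vi \<pi>" "strategy E Vi \<pi>'"
  shows "strategy E Vi (splice_strategy bx \<pi> \<pi>')"
  unfolding strategy_def
proof (intro allI impI)
  fix h :: "'a list" assume h: "h \<noteq> []" "last h \<in> Vi"
  show "set_pmf (splice_strategy bx \<pi> \<pi>' h) \<subseteq> E `` {last h}"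
  proof (cases "length bx < length h \<and> take (length bx) h = bx")
    case True
    then have "drop (length bx) h \<noteq> []" "last (drop (length bx) h) = last h"
      by auto
    then have "set_pmf (\<pi>' (drop (length bx) h)) \<subseteq> E `` {last h}"
      using assms(2) h by (metis strategy_def)
    then show ?thesis
      using True by (simp add: splice_strategy_def)
  next
    case False
    then have "splice_strategy bx \<pi> \<pi>' h = \<pi> h"
      unfolding splice_strategy_def by (rule if_not_P)
    then show ?thesis
      using assms(1) h by (simp add: strategy_def)
  qed
qed

lemma next_pmf_splice_strategy_short:
  "length h \<le> length bx \<Longrightarrow>
     next_pmf E V0 V1 \<pi>0 (splice_strategy bx \<pi> \<pi>') h = next_pmf E V0 V1 \<pi>0 \<pi> h"
  by (simp add: next_pmf_def splice_strategy_def)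

lemma next_pmf_splice_strategy_append:
  assumes "det_memoryless E V0 \<pi>0" "t \<noteq> []"
  shows "next_pmf E V0 V1 \<pi>0 (splice_strategy bx \<pi> \<pi>') (bx @ t) = next_pmf E V0 V1 \<pi>0 \<pi>' t"
proof -
  obtain f where f: "\<And>h. h \<noteq> [] \<Longrightarrow> last h \<in> V0 \<Longrightarrow> \<pi>0 h = return_pmf (f (last h))"
    using assms(1) unfolding det_memoryless_def by blast
  then have "last t \<in> V0 \<Longrightarrow> \<pi>0 (bx @ t) = \<pi>0 t"
    using assms(2) by simp
  then show ?thesis
    using assms(2) by (simp add: next_pmf_def splice_strategy_def)
qed

lemma play_measure_suffix_eq_1:
  fixes E :: "('v::finite \<times> 'v) set"
  assumes \<pi>0: "det_memoryless E V0 \<pi>0"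
    and \<pi>1: "strategy E V1 \<pi>1" and \<pi>1w: "strategy E V1 \<pi>1w"
    and xs: "xs \<noteq> []" "hd xs = v0" and pos: "prefix_prob E V0 V1 \<pi>0 \<pi>1w v0 xs > 0"
    and W: "W \<in> sets (stream_space (count_space UNIV))"
    and W': "W' \<in> sets (stream_space (count_space UNIV))"
    and suffix: "\<And>\<omega>. \<omega> \<in> W \<Longrightarrow> sdrop (length xs - 1) \<omega> \<in> W'"
    and almost_sure: "\<And>\<pi>. strategy E V1 \<pi> \<Longrightarrow> measure (play_measure E V0 V1 \<pi>0 \<pi> v0) W = 1"
  shows "measure (play_measure E V0 V1 \<pi>0 \<pi>1 (last xs)) W' = 1"
proof -
  let ?S = "stream_space (count_space (UNIV :: 'v set))"
  let ?n = "length xs - 1"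
  define \<pi>' where "\<pi>' = splice_strategy (butlast xs) \<pi>1w \<pi>1"
  define M where "M = play_measure E V0 V1 \<pi>0 \<pi>' v0"
  define C where "C = {\<omega>. stake (length xs) \<omega> = xs}"
  have M: "run_distribution (next_pmf E V0 V1 \<pi>0 \<pi>') v0 M"
    unfolding M_def by (rule play_measure_run_distribution)
  then interpret M: prob_space M
    by (simp add: run_distribution_def)
  have sets_M: "sets M = sets ?S"
    using M by (simp add: run_distribution_def)
  have "cylinder_prob (next_pmf E V0 V1 \<pi>0 \<pi>') v0 xs = prefix_prob E V0 V1 \<pi>0 \<pi>1w v0 xs"
    unfolding prefix_prob_eq_cylinder_prob \<pi>'_def
    by (rule cylinder_prob_cong) (simp add: next_pmf_splice_strategy_short)
  then have "run_distribution (next_pmf E V0 V1 \<pi>0 \<pi>1) (last xs)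
      (distr (uniform_measure M C) ?S (sdrop ?n))"
    unfolding C_def using pos
    by (intro run_distribution_sdrop_conditional[OF M xs])
      (simp_all add: \<pi>'_def next_pmf_splice_strategy_append[OF \<pi>0])
  then have P: "play_measure E V0 V1 \<pi>0 \<pi>1 (last xs) = distr (uniform_measure M C) ?S (sdrop ?n)"
    by (rule play_measure_eqI)
  have "measure M W = 1"
    unfolding M_def \<pi>'_def by (rule almost_sure[OF strategy_splice_strategy[OF \<pi>1w \<pi>1]])
  then have "AE \<omega> in M. \<omega> \<in> W"
    using M.prob_eq_1 W sets_M by simp
  then have "AE \<omega> in uniform_measure M C. sdrop ?n \<omega> \<in> W'"
    using sets_M sets_Collect_stake_eq suffix
    by (intro AE_uniform_measureI) (auto simp: C_def elim!: AE_mp)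
  then have "AE \<omega> in play_measure E V0 V1 \<pi>0 \<pi>1 (last xs). \<omega> \<in> W'"
    unfolding P using W' sets_M by (subst AE_distr_iff) (simp_all add: space_stream_space)
  then show ?thesis
    by (subst prob_space.prob_eq_1[OF prob_space_play_measure]) (simp_all add: sets_play_measure W')
qed

lemma strategy_exists:
  assumes "\<And>v. E `` {v} \<noteq> {}"
  shows "\<exists>\<pi>. strategy E Vi \<pi>"
proof -
  have "(last h, SOME y. (last h, y) \<in> E) \<in> E" for h
    using assms[of "last h"] by (auto intro: someI)
  then have "strategy E Vi (\<lambda>h. return_pmf (SOME y. (last h, y) \<in> E))"
    by (simp add: strategy_def)
  then show ?thesis
    by blast
qed

lemma cINF_eq_upper_bound_iff:
  fixes f :: "'a \<Rightarrow> real"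
  assumes "A \<noteq> {}" "bdd_below (f ` A)" "\<And>x. x \<in> A \<Longrightarrow> f x \<le> c"
  shows "(INF x\<in>A. f x) = c \<longleftrightarrow> (\<forall>x\<in>A. f x = c)"
proof
  show "\<forall>x\<in>A. f x = c" if "(INF x\<in>A. f x) = c"
    using that assms cINF_lower[OF assms(2)] by (auto intro: antisym)
  show "(INF x\<in>A. f x) = c" if "\<forall>x\<in>A. f x = c"
    using that assms(1) by (simp add: cINF_const)
qed

lemma INF_play_measure_eq_1_iff:
  fixes E :: "('v::finite \<times> 'v) set"
  assumes "game_graph E V0 V1 Vr"
  shows "(INF \<pi>1\<in>{\<pi>. strategy E V1 \<pi>}. measure (play_measure E V0 V1 \<pi>0 \<pi>1 v) A) = 1 \<longleftrightarrow>
    (\<forall>\<pi>1. strategy E V1 \<pi>1 \<longrightarrow> measure (play_measure E V0 V1 \<pi>0 \<pi>1 v) A = 1)"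
proof -
  have "{\<pi>. strategy E V1 \<pi>} \<noteq> {}"
    using assms strategy_exists by (auto simp: game_graph_def)
  moreover have "bdd_below ((\<lambda>\<pi>1. measure (play_measure E V0 V1 \<pi>0 \<pi>1 v) A) ` {\<pi>. strategy E V1 \<pi>})"
    by (rule bdd_belowI[of _ 0]) auto
  moreover have "measure (play_measure E V0 V1 \<pi>0 \<pi>1 v) A \<le> 1" for \<pi>1
    by (rule prob_space.prob_le_1[OF prob_space_play_measure])
  ultimately show ?thesis
    by (subst cINF_eq_upper_bound_iff) auto
qed

lemma sets_Collect_Parity:
  "{\<omega>. Parity B l \<omega>} \<in> sets (stream_space (count_space (UNIV :: 'v set)))"
proof -
  have "Measurable.pred (stream_space (count_space UNIV)) (\<lambda>\<omega>. alw (ev (holds (\<lambda>x. x \<in> B k))) \<omega>)"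
    for k
    by measurable
  then have "Measurable.pred (stream_space (count_space UNIV)) (Parity B l)"
    unfolding Parity_def by (intro pred_intros_countable_bounded pred_intros_logic) simp_all
  then show ?thesis
    by (simp add: pred_def space_stream_space)
qed

lemma sets_Collect_ev_escape:
  "{\<omega>. ev (ev (alw (holds (\<lambda>x. x \<notin> B i)) or holds (\<lambda>x. \<exists>j\<in>{i+1..l}. even j \<and> x \<in> B j))) \<omega>}
    \<in> sets (stream_space (count_space (UNIV :: 'v set)))"
proof -
  have [measurable]: "Measurable.pred (count_space UNIV) P" for P :: "'v \<Rightarrow> bool"
    by simp
  have "Measurable.pred (stream_space (count_space UNIV))
      (ev (ev (alw (holds (\<lambda>x. x \<notin> B i)) or holds (\<lambda>x. \<exists>j\<in>{i+1..l}. even j \<and> x \<in> B j))))"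
    by measurable
  then show ?thesis
    by (simp add: pred_def space_stream_space)
qed

lemma Parity_sdrop_ev_escape:
  assumes "Parity B l \<omega>" "i \<in> {1..l}" "odd i"
  shows "ev (ev (alw (holds (\<lambda>x. x \<notin> B i)) or holds (\<lambda>x. \<exists>j\<in>{i+1..l}. even j \<and> x \<in> B j)))
    (sdrop n \<omega>)"
proof (rule ccontr)
  assume "\<not> ?thesis"
  then have recurs: "\<forall>m. \<exists>k. \<omega> !! (n + m + k) \<in> B i"
    and avoids: "\<forall>m j. j \<in> {i+1..l} \<longrightarrow> even j \<longrightarrow> \<omega> !! (n + m) \<notin> B j"
    by (auto simp: ev_iff_sdrop alw_iff_sdrop sdrop_snth add.assoc)
  have "alw (ev (holds (\<lambda>x. x \<in> B i))) \<omega>"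
    unfolding alw_iff_sdrop ev_iff_sdrop
  proof
    fix m
    obtain k where "\<omega> !! (n + m + k) \<in> B i"
      using recurs by blast
    then show "\<exists>k. holds (\<lambda>x. x \<in> B i) (sdrop k (sdrop m \<omega>))"
      by (intro exI[of _ "n + k"]) (simp add: sdrop_snth ac_simps)
  qed
  moreover have "\<not> alw (ev (holds (\<lambda>x. x \<in> B j))) \<omega>" if "j \<in> {i+1..l}" "even j" for j
  proof
    assume "alw (ev (holds (\<lambda>x. x \<in> B j))) \<omega>"
    then obtain k where "holds (\<lambda>x. x \<in> B j) (sdrop k (sdrop n \<omega>))"
      unfolding alw_iff_sdrop ev_iff_sdrop by blast
    then show False
      using avoids that by (simp add: sdrop_snth ac_simps)
  qed
  ultimately show False
    using assms unfolding Parity_def by blast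
qed

theorem lemma3:
  fixes E :: "('v::finite \<times> 'v) set" and V0 V1 Vr :: "'v set"
    and B :: "nat \<Rightarrow> 'v set" and l :: nat and v0 :: 'v
    and \<pi>0 :: "'v list \<Rightarrow> 'v pmf"
  assumes "game_graph E V0 V1 Vr"
    and "parity_game E B l"
    and "det_memoryless E V0 \<pi>0"
    and "(INF \<pi>1 \<in> {\<pi>. strategy E V1 \<pi>}.
            measure (play_measure E V0 V1 \<pi>0 \<pi>1 v0) {\<omega>. Parity B l \<omega>}) = 1"
  shows "\<forall>xs. xs \<noteq> [] \<and> hd xs = v0 \<and>
           (\<exists>\<pi>1. strategy E V1 \<pi>1 \<and>
              measure (play_measure E V0 V1 \<pi>0 \<pi>1 v0)
                {\<omega> \<in> space (play_measure E V0 V1 \<pi>0 \<pi>1 v0). stake (length xs) \<omega> = xs} > 0)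
         \<longrightarrow> (\<forall>i\<in>{1..l}. odd i \<longrightarrow> last xs \<in> B i \<longrightarrow>
               (INF \<pi>1 \<in> {\<pi>. strategy E V1 \<pi>}.
                  measure (play_measure E V0 V1 \<pi>0 \<pi>1 (last xs))
                    {\<omega>. ev (ev (alw (holds (\<lambda>x. x \<notin> B i))
                              or holds (\<lambda>x. \<exists>j\<in>{i+1..l}. even j \<and> x \<in> B j))) \<omega>}) = 1)"
proof (intro allI impI ballI)
  fix xs i
  assume "xs \<noteq> [] \<and> hd xs = v0 \<and>
           (\<exists>\<pi>1. strategy E V1 \<pi>1 \<and>
              measure (play_measure E V0 V1 \<pi>0 \<pi>1 v0)
                {\<omega> \<in> space (play_measure E V0 V1 \<pi>0 \<pi>1 v0). stake (length xs) \<omega> = xs} > 0)"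
  then obtain \<pi>1w where xs: "xs \<noteq> []" "hd xs = v0" and \<pi>1w: "strategy E V1 \<pi>1w"
    and "measure (play_measure E V0 V1 \<pi>0 \<pi>1w v0)
      {\<omega> \<in> space (play_measure E V0 V1 \<pi>0 \<pi>1w v0). stake (length xs) \<omega> = xs} > 0"
    by blast
  then have pos: "prefix_prob E V0 V1 \<pi>0 \<pi>1w v0 xs > 0"
    using play_measure_run_distribution[of E V0 V1 \<pi>0 \<pi>1w v0]
    by (simp add: run_distribution_def prefix_prob_eq_cylinder_prob)
  assume i: "i \<in> {1..l}" "odd i"
  have Parity_almost_sure: "measure (play_measure E V0 V1 \<pi>0 \<pi>1 v0) {\<omega>. Parity B l \<omega>} = 1"
    if "strategy E V1 \<pi>1" for \<pi>1
    using assms(4) that INF_play_measure_eq_1_iff[OF assms(1)] by blast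
  show "(INF \<pi>1 \<in> {\<pi>. strategy E V1 \<pi>}.
          measure (play_measure E V0 V1 \<pi>0 \<pi>1 (last xs))
            {\<omega>. ev (ev (alw (holds (\<lambda>x. x \<notin> B i))
                      or holds (\<lambda>x. \<exists>j\<in>{i+1..l}. even j \<and> x \<in> B j))) \<omega>}) = 1"
    unfolding INF_play_measure_eq_1_iff[OF assms(1)]
    using play_measure_suffix_eq_1[OF assms(3) _ \<pi>1w xs pos sets_Collect_Parity sets_Collect_ev_escape]
      Parity_sdrop_ev_escape[OF _ i] Parity_almost_sure
    by blast
qed

end
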